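(* Let $S$ be a reflective numerical semigroup with $\mathrm{g}(S)=g\ge1$ and $\mathrm{m}(S)=a$. Then: $S$ is symmetric if and only if $g\equiv1\pmod a$; $S$ is pseudo-symmetric if and only if $g\equiv2\pmod a$; and $S$ is irreducible if and only if $g\equiv 1$ or $g\equiv 2\pmod a$.
   Context: A numerical semigroup is a submonoid $S$ of $(\mathbb{N}_0,+)$ with finite complement; $\mathrm{g}(S)$ is the number of its gaps (elements of $\mathbb{N}_0\setminus S$), $\mathrm{F}(S)$ its largest gap, and $\mathrm{m}(S)$ its smallest positive element. $S$ is symmetric if for every $z\in\mathbb{Z}$ exactly one of $z$ and $\mathrm{F}(S)-z$ lies in $S$. $S$ is pseudo-symmetric if $\mathrm{F}(S)$ is even and for every $z\in\mathbb{Z}\setminus\{\mathrm{F}(S)/2\}$ exactly one of $z$ and $\mathrm{F}(S)-z$ lies in $S$. $S$ is irreducible if it is not the intersection of two numerical semigroups properly containing $S$. A numerical semigroup $S$ of genus $g\ge1$ is called reflective if for every $z\in\{0,1,\dots,g-1\}$ exactly one of $z$ and $z+g$ belongs to $S$. *)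

theory Defs
  imports Main "HOL-Number_Theory.Cong"
begin

definition numerical_semigroup :: "nat set \<Rightarrow> bool" where
  "numerical_semigroup S \<longleftrightarrow> 0 \<in> S \<and> (\<forall>x\<in>S. \<forall>y\<in>S. x + y \<in> S) \<and> finite (UNIV - S)"

definition gaps :: "nat set \<Rightarrow> nat set" where
  "gaps S = UNIV - S"

definition genus :: "nat set \<Rightarrow> nat" where
  "genus S = card (gaps S)"

text \<open>Frobenius number (largest gap); only used when S has a gap.\<close>
definition frobenius :: "nat set \<Rightarrow> int" where
  "frobenius S = int (Max (gaps S))"

definition multiplicity :: "nat set \<Rightarrow> nat" where
  "multiplicity S = (LEAST x. x \<in> S \<and> 0 < x)"

definition int_mem :: "int \<Rightarrow> nat set \<Rightarrow> bool" where
  "int_mem z S \<longleftrightarrow> 0 \<le> z \<and> nat z \<in> S"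

definition symmetric_ns :: "nat set \<Rightarrow> bool" where
  "symmetric_ns S \<longleftrightarrow> (\<forall>z::int. int_mem z S \<noteq> int_mem (frobenius S - z) S)"

definition pseudo_symmetric_ns :: "nat set \<Rightarrow> bool" where
  "pseudo_symmetric_ns S \<longleftrightarrow> even (frobenius S) \<and>
     (\<forall>z::int. z \<noteq> frobenius S div 2 \<longrightarrow> int_mem z S \<noteq> int_mem (frobenius S - z) S)"

definition irreducible_ns :: "nat set \<Rightarrow> bool" where
  "irreducible_ns S \<longleftrightarrow> numerical_semigroup S \<and>
     \<not> (\<exists>S1 S2. numerical_semigroup S1 \<and> numerical_semigroup S2 \<and>
                S \<subset> S1 \<and> S \<subset> S2 \<and> S = S1 \<inter> S2)"

definition reflective :: "nat set \<Rightarrow> bool" where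
  "reflective S \<longleftrightarrow> numerical_semigroup S \<and> genus S \<ge> 1 \<and>
     (\<forall>z < genus S. (z \<in> S) \<noteq> (z + genus S \<in> S))"

end

theory Submission
  imports Defs
begin

text \<open>In a reflective semigroup of genus \<open>g\<close> the gaps are exactly the \<open>z < g\<close> outside \<open>S\<close>
  together with the \<open>z + g\<close> for \<open>z < g\<close> in \<open>S\<close>. Hence below \<open>g\<close> the elements of \<open>S\<close> are the
  multiples of the multiplicity \<open>a\<close>, and in \<open>[g, 2g)\<close> they are the numbers not congruent to \<open>g\<close>.
  With \<open>c\<close> the largest multiple of \<open>a\<close> below \<open>g\<close>, the Frobenius number is \<open>g + c\<close>, the
  reflection \<open>x \<mapsto> g + c - x\<close> exchanges elements and gaps outside the strip \<open>(c, g)\<close>, and the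
  strip consists of gaps. So \<open>S\<close> is symmetric iff the strip is empty (\<open>g \<equiv> 1\<close>) and
  pseudo-symmetric iff it is the single point \<open>(g + c)/2\<close> (\<open>g \<equiv> 2\<close>). Otherwise \<open>g - 1\<close> is a gap
  that can be adjoined to \<open>S\<close>, as can the Frobenius number, and \<open>S\<close> is the intersection of the
  two resulting semigroups.\<close>

lemma int_mem_int [simp]: "int_mem (int x) S \<longleftrightarrow> x \<in> S"
  by (simp add: int_mem_def)

lemma frobenius_eqI:
  assumes "F \<notin> S" and "\<And>x. F < x \<Longrightarrow> x \<in> S"
  shows "frobenius S = int F"
proof -
  have "gaps S \<subseteq> {..F}"
    using assms(2) by (auto simp: gaps_def not_less[symmetric])
  then have "Max (gaps S) = F"
    using assms(1) by (intro Max_eqI) (auto simp: gaps_def finite_subset)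
  then show ?thesis
    by (simp add: frobenius_def)
qed

text \<open>Outside \<open>[0, F]\<close> exactly one of \<open>z\<close> and \<open>F - z\<close> is negative and the other exceeds \<open>F\<close>,
  so the reflection condition only has content for natural numbers up to \<open>F\<close>.\<close>
lemma int_mem_reflection_iff:
  assumes "\<And>x. F < x \<Longrightarrow> x \<in> S"
  shows "(\<forall>z. P z \<longrightarrow> int_mem z S \<noteq> int_mem (int F - z) S)
     \<longleftrightarrow> (\<forall>x\<le>F. P (int x) \<longrightarrow> (x \<in> S) \<noteq> (F - x \<in> S))"
proof
  assume all: "\<forall>z. P z \<longrightarrow> int_mem z S \<noteq> int_mem (int F - z) S"
  show "\<forall>x\<le>F. P (int x) \<longrightarrow> (x \<in> S) \<noteq> (F - x \<in> S)"
  proof (intro allI impI)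
    fix x assume "x \<le> F" "P (int x)"
    then have diff: "int F - int x = int (F - x)"
      by simp
    have "int_mem (int x) S \<noteq> int_mem (int (F - x)) S"
      using all[rule_format, OF \<open>P (int x)\<close>] unfolding diff .
    then show "(x \<in> S) \<noteq> (F - x \<in> S)"
      unfolding int_mem_int .
  qed
next
  assume inside: "\<forall>x\<le>F. P (int x) \<longrightarrow> (x \<in> S) \<noteq> (F - x \<in> S)"
  show "\<forall>z. P z \<longrightarrow> int_mem z S \<noteq> int_mem (int F - z) S"
  proof (intro allI impI)
    fix z assume "P z"
    consider "z < 0" | "int F < z" | x where "z = int x" "x \<le> F"
      by (metis nonneg_int_cases not_le of_nat_le_iff)
    then show "int_mem z S \<noteq> int_mem (int F - z) S"
    proof cases
      case 1
      then have "F < nat (int F - z)"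
        by simp
      then show ?thesis
        using 1 assms by (simp add: int_mem_def)
    next
      case 2
      then have "F < nat z"
        by simp
      then show ?thesis
        using 2 assms by (simp add: int_mem_def)
    next
      case (3 x)
      then have diff: "int F - int x = int (F - x)"
        by simp
      have "(x \<in> S) \<noteq> (F - x \<in> S)"
        using \<open>P z\<close> unfolding \<open>z = int x\<close> by (rule inside[rule_format, OF \<open>x \<le> F\<close>])
      then show ?thesis
        unfolding \<open>z = int x\<close> diff int_mem_int .
    qed
  qed
qed

lemma symmetric_ns_iff:
  assumes "F \<notin> S" and "\<And>x. F < x \<Longrightarrow> x \<in> S"
  shows "symmetric_ns S \<longleftrightarrow> (\<forall>x\<le>F. (x \<in> S) \<noteq> (F - x \<in> S))"
  using int_mem_reflection_iff[OF assms(2), where P = "\<lambda>_. True"]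
  by (simp add: symmetric_ns_def frobenius_eqI[OF assms])

lemma pseudo_symmetric_ns_iff:
  assumes "F \<notin> S" and "\<And>x. F < x \<Longrightarrow> x \<in> S"
  shows "pseudo_symmetric_ns S \<longleftrightarrow>
    even F \<and> (\<forall>x\<le>F. 2 * x \<noteq> F \<longrightarrow> (x \<in> S) \<noteq> (F - x \<in> S))"
proof -
  have half: "int x \<noteq> int F div 2 \<longleftrightarrow> 2 * x \<noteq> F" if "even F" for x
    using that by (auto elim!: evenE)
  have "pseudo_symmetric_ns S \<longleftrightarrow>
      even F \<and> (\<forall>z. z \<noteq> int F div 2 \<longrightarrow> int_mem z S \<noteq> int_mem (int F - z) S)"
    by (simp add: pseudo_symmetric_ns_def frobenius_eqI[OF assms])
  also have "\<dots> \<longleftrightarrow> even F \<and> (\<forall>x\<le>F. int x \<noteq> int F div 2 \<longrightarrow> (x \<in> S) \<noteq> (F - x \<in> S))"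
    by (simp only: int_mem_reflection_iff[OF assms(2)])
  also have "\<dots> \<longleftrightarrow> even F \<and> (\<forall>x\<le>F. 2 * x \<noteq> F \<longrightarrow> (x \<in> S) \<noteq> (F - x \<in> S))"
    using half by blast
  finally show ?thesis .
qed

lemma symmetric_nsD:
  assumes "symmetric_ns S" "F \<notin> S" "\<And>x. F < x \<Longrightarrow> x \<in> S" "x \<le> F"
  shows "(x \<in> S) \<noteq> (F - x \<in> S)"
proof -
  have "\<forall>x\<le>F. (x \<in> S) \<noteq> (F - x \<in> S)"
    by (rule iffD1[OF symmetric_ns_iff[OF assms(2,3)] assms(1)])
  then have "x \<le> F \<longrightarrow> (x \<in> S) \<noteq> (F - x \<in> S)"
    by (rule spec)
  then show ?thesis
    using assms(4) by (rule mp)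
qed

lemma pseudo_symmetric_nsD:
  assumes "pseudo_symmetric_ns S" "F \<notin> S" "\<And>x. F < x \<Longrightarrow> x \<in> S"
  shows "even F"
    and "x \<le> F \<Longrightarrow> 2 * x \<noteq> F \<Longrightarrow> (x \<in> S) \<noteq> (F - x \<in> S)"
proof -
  have *: "even F \<and> (\<forall>x\<le>F. 2 * x \<noteq> F \<longrightarrow> (x \<in> S) \<noteq> (F - x \<in> S))"
    by (rule iffD1[OF pseudo_symmetric_ns_iff[OF assms(2,3)] assms(1)])
  then show "even F"
    by (rule conjunct1)
  from * have "x \<le> F \<longrightarrow> 2 * x \<noteq> F \<longrightarrow> (x \<in> S) \<noteq> (F - x \<in> S)"
    by (blast dest: conjunct2 spec)
  then show "x \<le> F \<Longrightarrow> 2 * x \<noteq> F \<Longrightarrow> (x \<in> S) \<noteq> (F - x \<in> S)"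
    by simp
qed

lemma numerical_semigroup_insert:
  assumes "numerical_semigroup S"
    and "\<And>y. y \<in> S \<Longrightarrow> 0 < y \<Longrightarrow> h + y \<in> S" and "h + h \<in> S"
  shows "numerical_semigroup (insert h S)"
  unfolding numerical_semigroup_def
proof (intro conjI ballI)
  show "0 \<in> insert h S" and "finite (UNIV - insert h S)"
    using assms(1) by (auto simp: numerical_semigroup_def elim: finite_subset[rotated])
  have add: "x + y \<in> S" if "x \<in> S" "y \<in> S" for x y
    using assms(1) that by (simp add: numerical_semigroup_def)
  have shift: "h + y \<in> insert h S" if "y \<in> S" for y
    using assms(2)[OF that] that by (cases "y = 0") auto
  fix x y assume "x \<in> insert h S" "y \<in> insert h S"
  then consider "x = h" "y = h" | "x = h" "y \<in> S" | "x \<in> S" "y = h" | "x \<in> S" "y \<in> S"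
    by blast
  then show "x + y \<in> insert h S"
    by cases (use assms(3) shift[of x] shift[of y] add[of x y] in \<open>simp_all add: add.commute[of x]\<close>)
qed

text \<open>A numerical semigroup strictly containing \<open>S\<close> contains a gap \<open>x\<close> of \<open>S\<close>; if \<open>x\<close> is not \<open>F\<close>
  itself, then \<open>F\<close> is obtained as \<open>x + (F - x)\<close> or as \<open>x + x\<close>.\<close>
lemma frobenius_mem_oversemigroup:
  assumes T: "numerical_semigroup T" "S \<subset> T"
    and up: "\<And>x. F < x \<Longrightarrow> x \<in> S"
    and partner: "\<And>x. x < F \<Longrightarrow> x \<notin> S \<Longrightarrow> 2 * x = F \<or> F - x \<in> S"
  shows "F \<in> T"
proof -
  obtain x where x: "x \<in> T" "x \<notin> S"
    using T(2) by blast
  have add: "u + v \<in> T" if "u \<in> T" "v \<in> T" for u v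
    using T(1) that by (simp add: numerical_semigroup_def)
  have "x \<le> F"
    using x up not_le by blast
  then consider "x = F" | "x < F" "2 * x = F" | "x < F" "F - x \<in> S"
    using partner x(2) le_neq_implies_less by blast
  then show ?thesis
  proof cases
    case 2
    then show ?thesis using add[OF x(1) x(1)] by (simp add: mult_2)
  next
    case 3
    then show ?thesis using add[of x "F - x"] x(1) T(2) by auto
  qed (use x in simp)
qed

lemma irreducible_ns_if_symmetric_or_pseudo_symmetric:
  assumes ns: "numerical_semigroup S" and gap: "F \<notin> S" and up: "\<And>x. F < x \<Longrightarrow> x \<in> S"
    and "symmetric_ns S \<or> pseudo_symmetric_ns S"
  shows "irreducible_ns S"
proof -
  have "2 * x = F \<or> F - x \<in> S" if "x < F" "x \<notin> S" for x
    using assms(4)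
  proof
    assume "symmetric_ns S"
    then show ?thesis
      using symmetric_nsD[OF _ gap up, of x] that by auto
  next
    assume "pseudo_symmetric_ns S"
    then show ?thesis
      using pseudo_symmetric_nsD(2)[OF _ gap up, of x] that by auto
  qed
  then have over: "F \<in> T" if "numerical_semigroup T" "S \<subset> T" for T
    using frobenius_mem_oversemigroup[OF that up] by blast
  show ?thesis
    unfolding irreducible_ns_def
  proof (intro conjI notI)
    assume "\<exists>S1 S2. numerical_semigroup S1 \<and> numerical_semigroup S2 \<and>
      S \<subset> S1 \<and> S \<subset> S2 \<and> S = S1 \<inter> S2"
    then obtain S1 S2 where "numerical_semigroup S1" "numerical_semigroup S2"
      "S \<subset> S1" "S \<subset> S2" "S = S1 \<inter> S2"
      by blast
    then have "F \<in> S"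
      using over by blast
    then show False
      using gap by contradiction
  qed (fact ns)
qed

text \<open>A gap \<open>h \<noteq> F\<close> with \<open>h + (S \<setminus> {0}) \<subseteq> S\<close> and \<open>2h \<in> S\<close> splits \<open>S\<close> as
  \<open>(S \<union> {F}) \<inter> (S \<union> {h})\<close>.\<close>
lemma not_irreducible_ns_if_special_gap:
  assumes ns: "numerical_semigroup S" and gap: "F \<notin> S" and up: "\<And>x. F < x \<Longrightarrow> x \<in> S"
    and "h \<notin> S" "h \<noteq> F"
    and "\<And>y. y \<in> S \<Longrightarrow> 0 < y \<Longrightarrow> h + y \<in> S" and "h + h \<in> S"
  shows "\<not> irreducible_ns S"
proof -
  have "0 < F"
    using ns gap by (metis gr0I numerical_semigroup_def)
  then have "numerical_semigroup (insert F S)"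
    using ns up by (intro numerical_semigroup_insert) auto
  moreover have "numerical_semigroup (insert h S)"
    using ns assms(6,7) by (rule numerical_semigroup_insert)
  moreover have "S \<subset> insert F S" "S \<subset> insert h S" "S = insert F S \<inter> insert h S"
    using gap assms(4,5) by auto
  ultimately show ?thesis
    unfolding irreducible_ns_def by blast
qed

locale reflective_semigroup =
  fixes S :: "nat set" and g a :: nat
  assumes reflective: "reflective S" and genus: "genus S = g" and multiplicity: "multiplicity S = a"
begin

lemma numerical_semigroup: "numerical_semigroup S"
  using reflective by (simp add: reflective_def)

lemma genus_pos: "1 \<le> g"
  using reflective genus by (simp add: reflective_def)

lemma add_mem: "x \<in> S \<Longrightarrow> y \<in> S \<Longrightarrow> x + y \<in> S"
  using numerical_semigroup by (simp add: numerical_semigroup_def)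

lemma reflection: "z < g \<Longrightarrow> (z \<in> S) \<noteq> (z + g \<in> S)"
  using reflective genus by (simp add: reflective_def)

text \<open>Each \<open>z < g\<close> contributes exactly one gap, \<open>z\<close> or \<open>z + g\<close>; as there are \<open>g\<close> gaps in all,
  these are all of them.\<close>
lemma gaps_eq: "gaps S = (\<lambda>z. if z \<in> S then z + g else z) ` {..<g}"
proof (rule card_subset_eq[symmetric])
  show "finite (gaps S)"
    using numerical_semigroup by (simp add: numerical_semigroup_def gaps_def)
  show "(\<lambda>z. if z \<in> S then z + g else z) ` {..<g} \<subseteq> gaps S"
    using reflection by (auto simp: gaps_def)
  have "inj_on (\<lambda>z. if z \<in> S then z + g else z) {..<g}"
    by (auto simp: inj_on_def split: if_splits)
  then show "card ((\<lambda>z. if z \<in> S then z + g else z) ` {..<g}) = card (gaps S)"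
    using genus by (simp only: card_image genus_def card_lessThan)
qed

lemma mem_if_ge:
  assumes "2 * g \<le> x"
  shows "x \<in> S"
proof (rule ccontr)
  assume "x \<notin> S"
  then have "x \<in> gaps S"
    by (simp add: gaps_def)
  then obtain z where "z < g" "x = (if z \<in> S then z + g else z)"
    unfolding gaps_eq by blast
  then show False
    using assms by (simp split: if_splits)
qed

lemma multiplicity_mem: "a \<in> S" "0 < a"
  and multiplicity_le: "y \<in> S \<Longrightarrow> 0 < y \<Longrightarrow> a \<le> y"
proof -
  have "2 * g \<in> S \<and> 0 < 2 * g"
    using mem_if_ge genus_pos by simp
  from LeastI[of "\<lambda>x. x \<in> S \<and> 0 < x", OF this]
  show "a \<in> S" "0 < a"
    using multiplicity by (auto simp: multiplicity_def)
  show "y \<in> S \<Longrightarrow> 0 < y \<Longrightarrow> a \<le> y"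
    using Least_le[of "\<lambda>x. x \<in> S \<and> 0 < x"] multiplicity by (auto simp: multiplicity_def)
qed

lemma multiple_mem: "k * a \<in> S"
  using numerical_semigroup
  by (induction k) (auto simp: add_mem multiplicity_mem numerical_semigroup_def)

lemma multiplicity_ge_2: "2 \<le> a"
proof (rule ccontr)
  assume "\<not> 2 \<le> a"
  then have "a = 1"
    using multiplicity_mem by simp
  then have "gaps S = {}"
    using multiple_mem[of x for x] by (auto simp: gaps_def)
  then show False
    using genus genus_pos by (simp add: genus_def)
qed

text \<open>If \<open>x \<in> S\<close> with \<open>x = qa + \<rho>\<close>, \<open>0 < \<rho> < a\<close>, then \<open>\<rho>\<close> is a gap below \<open>g\<close>, so \<open>\<rho> + g \<in> S\<close>
  and \<open>x + g = qa + (\<rho> + g) \<in> S\<close>, contradicting reflectivity at \<open>x\<close>.\<close>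
lemma mem_below_genus_iff:
  assumes "x < g"
  shows "x \<in> S \<longleftrightarrow> a dvd x"
proof
  assume x: "x \<in> S"
  show "a dvd x"
  proof (rule ccontr)
    assume "\<not> a dvd x"
    then have "x mod a \<notin> S"
      using multiplicity_le[of "x mod a"] mod_less_divisor[OF multiplicity_mem(2), of x]
      by (auto simp: dvd_eq_mod_eq_0)
    moreover have "x mod a < g"
      using assms by (meson le_less_trans mod_less_eq_dividend)
    ultimately have "x mod a + g \<in> S"
      using reflection by blast
    then have "x div a * a + (x mod a + g) \<in> S"
      using add_mem multiple_mem by blast
    then show False
      using reflection[OF assms] x by simp
  qed
next
  assume "a dvd x"
  then show "x \<in> S"
    using multiple_mem by (auto elim: dvdE simp: mult.commute)
qed

lemma mem_between_iff:
  assumes "g \<le> x" "x < 2 * g"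
  shows "x \<in> S \<longleftrightarrow> \<not> a dvd (x - g)"
  using reflection[of "x - g"] mem_below_genus_iff[of "x - g"] assms by auto

text \<open>The largest multiple of the multiplicity below the genus; the Frobenius number turns out
  to be \<open>g + c\<close>.\<close>
definition c :: nat where
  "c = (g - 1) - (g - 1) mod a"

lemma dvd_c: "a dvd c"
  unfolding c_def by (rule dvd_minus_mod)

lemma c_less_genus: "c < g"
  using genus_pos by (simp add: c_def)

lemma genus_le_c_plus: "g \<le> c + a"
  using genus_pos mod_less_divisor[OF multiplicity_mem(2), of "g - 1"]
    mod_less_eq_dividend[of "g - 1" a]
  unfolding c_def by linarith

lemma not_dvd_between_multiples:
  assumes "c < x" "x < c + a"
  shows "\<not> a dvd x"
proof
  assume "a dvd x"
  then have "a dvd x - c"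
    using dvd_c by (rule dvd_diff_nat)
  moreover have "0 < x - c" "x - c < a"
    using assms by auto
  ultimately show False
    using nat_dvd_not_less by blast
qed

lemma gap_in_strip: "c < x \<Longrightarrow> x < g \<Longrightarrow> x \<notin> S"
  using mem_below_genus_iff not_dvd_between_multiples[of x] genus_le_c_plus by simp

lemma frobenius_gap: "g + c \<notin> S"
  using mem_between_iff[of "g + c"] c_less_genus dvd_c by simp

lemma mem_above_frobenius: "g + c < x \<Longrightarrow> x \<in> S"
proof (cases "2 * g \<le> x")
  case False
  assume "g + c < x"
  then have "c < x - g" "x - g < c + a"
    using False genus_le_c_plus by auto
  then show "x \<in> S"
    using False mem_between_iff[of x] not_dvd_between_multiples \<open>g + c < x\<close> by simp
qed (rule mem_if_ge)

lemma reflection_about_frobenius_le_c: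
  assumes "x \<le> c"
  shows "(x \<in> S) \<noteq> (g + c - x \<in> S)"
proof -
  have "c = (c - x) + x"
    using assms by simp
  then have "a dvd c - x \<longleftrightarrow> a dvd x"
    using dvd_c by (metis dvd_add_left_iff dvd_add_right_iff)
  then show ?thesis
    using mem_below_genus_iff[of x] mem_between_iff[of "g + c - x"] assms c_less_genus by simp
qed

lemma reflection_about_frobenius:
  assumes "x \<le> g + c" and "x \<le> c \<or> g \<le> x"
  shows "(x \<in> S) \<noteq> (g + c - x \<in> S)"
  using assms(2)
proof
  assume "g \<le> x"
  then have "g + c - x \<le> c" "g + c - (g + c - x) = x"
    using assms(1) by auto
  then show ?thesis
    using reflection_about_frobenius_le_c[of "g + c - x"] by auto
qed (rule reflection_about_frobenius_le_c)

lemma genus_pred_add_mem: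
  assumes "y \<in> S" "0 < y"
  shows "g - 1 + y \<in> S"
proof (cases "y < g")
  case True
  then have "a dvd y"
    using assms(1) mem_below_genus_iff by blast
  have "\<not> a dvd y - 1"
  proof
    assume "a dvd y - 1"
    then have "a dvd y - (y - 1)"
      using \<open>a dvd y\<close> by (rule dvd_diff_nat[rotated])
    then show False
      using assms(2) multiplicity_ge_2 by simp
  qed
  moreover have "g - 1 + y - g = y - 1"
    using assms(2) genus_pos by simp
  ultimately show ?thesis
    using mem_between_iff[of "g - 1 + y"] True assms(2) genus_pos by simp
next
  case False
  have "g \<notin> S"
    using mem_between_iff[of g] genus_pos by simp
  then have "g < y"
    using False assms(1) by (metis linorder_neqE_nat)
  then show ?thesis
    using mem_if_ge by simp
qed

lemma symmetric_ns_iff_reflection: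
  "symmetric_ns S \<longleftrightarrow> (\<forall>x\<le>g + c. (x \<in> S) \<noteq> (g + c - x \<in> S))"
  by (rule symmetric_ns_iff) (use frobenius_gap mem_above_frobenius in auto)

lemma pseudo_symmetric_ns_iff_reflection:
  "pseudo_symmetric_ns S \<longleftrightarrow>
    even (g + c) \<and> (\<forall>x\<le>g + c. 2 * x \<noteq> g + c \<longrightarrow> (x \<in> S) \<noteq> (g + c - x \<in> S))"
  by (rule pseudo_symmetric_ns_iff) (use frobenius_gap mem_above_frobenius in auto)

lemma symmetric_ns_iff_strip_empty: "symmetric_ns S \<longleftrightarrow> c + 1 = g"
proof
  assume sym: "symmetric_ns S"
  show "c + 1 = g"
  proof (rule ccontr)
    assume "c + 1 \<noteq> g"
    then have "c + 1 < g"
      using c_less_genus by simp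
    then have "g - 1 \<notin> S" "g + c - (g - 1) \<notin> S"
      using gap_in_strip[of "g - 1"] gap_in_strip[of "c + 1"] by auto
    moreover have "(g - 1 \<in> S) \<noteq> (g + c - (g - 1) \<in> S)"
      by (rule symmetric_nsD[OF sym frobenius_gap]) (auto intro: mem_above_frobenius)
    ultimately show False
      by blast
  qed
next
  assume "c + 1 = g"
  show "symmetric_ns S"
    unfolding symmetric_ns_iff_reflection
  proof (intro allI impI)
    fix x assume "x \<le> g + c"
    then show "(x \<in> S) \<noteq> (g + c - x \<in> S)"
      using \<open>c + 1 = g\<close> by (intro reflection_about_frobenius) auto
  qed
qed

lemma pseudo_symmetric_ns_iff_strip_singleton: "pseudo_symmetric_ns S \<longleftrightarrow> c + 2 = g"
proof
  assume ps: "pseudo_symmetric_ns S"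
  have "even (g + c)"
    by (rule pseudo_symmetric_nsD(1)[OF ps frobenius_gap]) (rule mem_above_frobenius)
  show "c + 2 = g"
  proof (rule ccontr)
    assume "c + 2 \<noteq> g"
    moreover have "c + 1 \<noteq> g"
      using \<open>even (g + c)\<close> by presburger
    ultimately have "c + 2 < g"
      using c_less_genus by simp
    then have "g - 1 \<notin> S" "g + c - (g - 1) \<notin> S"
      using gap_in_strip[of "g - 1"] gap_in_strip[of "c + 1"] by auto
    moreover have "(g - 1 \<in> S) \<noteq> (g + c - (g - 1) \<in> S)"
      by (rule pseudo_symmetric_nsD(2)[OF ps frobenius_gap])
        (use \<open>c + 2 < g\<close> in \<open>auto intro: mem_above_frobenius\<close>)
    ultimately show False
      by blast
  qed
next
  assume "c + 2 = g"
  show "pseudo_symmetric_ns S"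
    unfolding pseudo_symmetric_ns_iff_reflection
  proof (intro conjI allI impI)
    show "even (g + c)"
      using \<open>c + 2 = g\<close> by presburger
    fix x assume "x \<le> g + c" "2 * x \<noteq> g + c"
    then show "(x \<in> S) \<noteq> (g + c - x \<in> S)"
      using \<open>c + 2 = g\<close> by (intro reflection_about_frobenius) auto
  qed
qed

text \<open>If the strip \<open>(c, g)\<close> has at least two elements, adjoining the gap \<open>g - 1\<close> to \<open>S\<close> still
  gives a numerical semigroup, because \<open>2g - 2\<close> lies in \<open>S\<close>.\<close>
lemma irreducible_ns_iff_strip_small: "irreducible_ns S \<longleftrightarrow> c + 1 = g \<or> c + 2 = g"
proof
  assume irr: "irreducible_ns S"
  show "c + 1 = g \<or> c + 2 = g"
  proof (rule ccontr)
    assume "\<not> (c + 1 = g \<or> c + 2 = g)"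
    then have "c + 2 < g"
      using c_less_genus by auto
    have "g - 1 \<notin> S"
      using gap_in_strip \<open>c + 2 < g\<close> by simp
    moreover have "g - 1 \<noteq> g + c"
      using genus_pos by simp
    moreover have "g - 1 + (g - 1) \<in> S"
    proof -
      have "\<not> a dvd g - 2"
        using not_dvd_between_multiples[of "g - 2"] \<open>c + 2 < g\<close> genus_le_c_plus by simp
      moreover have "g - 1 + (g - 1) - g = g - 2"
        using \<open>c + 2 < g\<close> by simp
      ultimately show ?thesis
        using mem_between_iff[of "g - 1 + (g - 1)"] \<open>c + 2 < g\<close> by simp
    qed
    ultimately have "\<not> irreducible_ns S"
      by (intro not_irreducible_ns_if_special_gap[OF numerical_semigroup frobenius_gap])
        (blast intro: mem_above_frobenius genus_pred_add_mem)+
    then show False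
      using irr by contradiction
  qed
next
  assume "c + 1 = g \<or> c + 2 = g"
  then have "symmetric_ns S \<or> pseudo_symmetric_ns S"
    by (simp add: symmetric_ns_iff_strip_empty pseudo_symmetric_ns_iff_strip_singleton)
  then show "irreducible_ns S"
    by (intro irreducible_ns_if_symmetric_or_pseudo_symmetric[OF numerical_semigroup frobenius_gap])
      (auto intro: mem_above_frobenius)
qed

lemma cong_Suc_iff:
  assumes "k < a"
  shows "[g = Suc k] (mod a) \<longleftrightarrow> c + Suc k = g"
proof -
  have "[g = Suc k] (mod a) \<longleftrightarrow> [(g - 1) + 1 = k + 1] (mod a)"
    using genus_pos by simp
  also have "\<dots> \<longleftrightarrow> [g - 1 = k] (mod a)"
    by (rule cong_add_rcancel_nat)
  also have "\<dots> \<longleftrightarrow> (g - 1) mod a = k"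
    using assms by (simp add: cong_def)
  also have "\<dots> \<longleftrightarrow> c + Suc k = g"
    using mod_less_eq_dividend[of "g - 1" a] genus_pos unfolding c_def by arith
  finally show ?thesis .
qed

end

theorem mainTheorem8:
  fixes S :: "nat set" and g a :: nat
  assumes "reflective S" and "genus S = g" and "g \<ge> 1" and "multiplicity S = a"
  shows "(symmetric_ns S \<longleftrightarrow> [g = 1] (mod a))
       \<and> (pseudo_symmetric_ns S \<longleftrightarrow> [g = 2] (mod a))
       \<and> (irreducible_ns S \<longleftrightarrow> [g = 1] (mod a) \<or> [g = 2] (mod a))"
proof -
  interpret reflective_semigroup S g a
    using assms(1,2,4) by unfold_locales
  have "[g = 1] (mod a) \<longleftrightarrow> c + 1 = g"
    using cong_Suc_iff[of 0] multiplicity_ge_2 by simp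
  moreover have "[g = 2] (mod a) \<longleftrightarrow> c + 2 = g"
    using cong_Suc_iff[of 1] multiplicity_ge_2 by (simp add: numeral_2_eq_2)
  ultimately show ?thesis
    using symmetric_ns_iff_strip_empty pseudo_symmetric_ns_iff_strip_singleton
      irreducible_ns_iff_strip_small
    by simp
qed

end
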